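(* Let $p\ge1$ and let $n\ge1$ be a natural number whose Zeckendorf representation is $[n]=\varepsilon_p\varepsilon_{p-1}\cdots\varepsilon_1$ with $\varepsilon_p=1$. Then for every word $u\in(\vartheta_1^p(b))^{\varepsilon_p}(\vartheta_1^{p-1}(b))^{\varepsilon_{p-1}}\cdots(\vartheta_1(b))^{\varepsilon_1}$, at least one of the words $uab$ or $uba$ is a prefix of some word in $\vartheta_1^{p+1}(a)$.
   Context: Fibonacci numbers: $f_0=f_1=1$, $f_n=f_{n-1}+f_{n-2}$ for $n\ge2$. Every positive integer $n$ has a unique Zeckendorf representation $n=\sum_{i=1}^r\varepsilon_if_i$ with $\varepsilon_i\in\{0,1\}$, $\varepsilon_r=1$ and $\varepsilon_i\varepsilon_{i+1}=0$; one writes $[n]=\varepsilon_r\cdots\varepsilon_1$. The random Fibonacci substitution is $\vartheta_1\colon a\mapsto\{ab,ba\},\ b\mapsto\{a\}$, extended to words by set concatenation ($AB=\{xy\mid x\in A,y\in B\}$) and to sets by unions; $\vartheta_1^p$ is its $p$-fold iterate. For a set $A$ of words, $A^0=\{\text{empty word}\}$ and $A^{k}=A\cdots A$ ($k$ factors). Note $|\vartheta_1^i(b)|=f_i$ for all words in that set. *)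

theory Defs
  imports Main "HOL-Library.Sublist"
begin

fun fibo :: "nat \<Rightarrow> nat" where
  "fibo 0 = 1"
| "fibo (Suc 0) = 1"
| "fibo (Suc (Suc n)) = fibo (Suc n) + fibo n"

datatype letter = a | b

definition conc :: "'x list set \<Rightarrow> 'x list set \<Rightarrow> 'x list set" where
  "conc S T = {x @ y | x y. x \<in> S \<and> y \<in> T}"

fun setpow :: "'x list set \<Rightarrow> nat \<Rightarrow> 'x list set" where
  "setpow S 0 = {[]}"
| "setpow S (Suc k) = conc S (setpow S k)"

fun theta1_letter :: "letter \<Rightarrow> letter list set" where
  "theta1_letter a = {[a, b], [b, a]}"
| "theta1_letter b = {[a]}"

fun theta1_word :: "letter list \<Rightarrow> letter list set" where
  "theta1_word [] = {[]}"
| "theta1_word (x # xs) = conc (theta1_letter x) (theta1_word xs)"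

definition theta1_set :: "letter list set \<Rightarrow> letter list set" where
  "theta1_set S = (\<Union>w\<in>S. theta1_word w)"

definition theta1_pow :: "nat \<Rightarrow> letter list \<Rightarrow> letter list set" where
  "theta1_pow p w = (theta1_set ^^ p) {w}"

fun zeck_words :: "(nat \<Rightarrow> nat) \<Rightarrow> nat \<Rightarrow> letter list set" where
  "zeck_words eps 0 = {[]}"
| "zeck_words eps (Suc k) =
     conc (setpow (theta1_pow (Suc k) [b]) (eps (Suc k))) (zeck_words eps k)"

end

theory Submission
  imports Defs
begin

text \<open>Since \<open>\<vartheta>\<^sub>1(a) \<ni> ab, ba\<close>, the set \<open>\<vartheta>\<^sub>1\<^sup>k\<^sup>+\<^sup>1(a)\<close> contains all concatenations
  \<open>\<vartheta>\<^sub>1\<^sup>k(a)\<vartheta>\<^sub>1\<^sup>k(b)\<close> and \<open>\<vartheta>\<^sub>1\<^sup>k(b)\<vartheta>\<^sub>1\<^sup>k(a)\<close>, while \<open>\<vartheta>\<^sub>1\<^sup>k\<^sup>+\<^sup>1(b) = \<vartheta>\<^sub>1\<^sup>k(a)\<close>. In particular every word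
  of \<open>\<vartheta>\<^sub>1\<^sup>j(a)\<close> is a prefix of a word of \<open>\<vartheta>\<^sub>1\<^sup>k(a)\<close> for \<open>k \<ge> j\<close>. Induct on the top index \<open>m\<close> of
  the Zeckendorf word \<open>u\<close>: if \<open>\<epsilon>\<^sub>m = 0\<close>, \<open>u\<close> is a shorter Zeckendorf word; if \<open>\<epsilon>\<^sub>m = 1\<close>, then
  \<open>u = xu'\<close> with \<open>x \<in> \<vartheta>\<^sub>1\<^sup>m(b)\<close> and, as \<open>\<epsilon>\<^sub>m\<^sub>-\<^sub>1 = 0\<close>, \<open>u'\<close> a Zeckendorf word with top index
  \<open>m - 2\<close>. By induction \<open>u'ab\<close> or \<open>u'ba\<close> is a prefix of some \<open>w \<in> \<vartheta>\<^sub>1\<^sup>m(a)\<close>, and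
  \<open>xw \<in> \<vartheta>\<^sub>1\<^sup>m(b)\<vartheta>\<^sub>1\<^sup>m(a) \<subseteq> \<vartheta>\<^sub>1\<^sup>m\<^sup>+\<^sup>1(a)\<close>.\<close>

lemma theta1_word_append:
  "v \<in> theta1_word x \<Longrightarrow> w \<in> theta1_word y \<Longrightarrow> v @ w \<in> theta1_word (x @ y)"
  by (induction x arbitrary: v) (simp, fastforce simp: conc_def)

lemma theta1_pow_Suc: "theta1_pow (Suc k) w = theta1_set (theta1_pow k w)"
  by (simp add: theta1_pow_def)

lemma theta1_pow_append:
  "v \<in> theta1_pow k x \<Longrightarrow> w \<in> theta1_pow k y \<Longrightarrow> v @ w \<in> theta1_pow k (x @ y)"
proof (induction k arbitrary: v w)
  case 0
  then show ?case by (simp add: theta1_pow_def)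
next
  case (Suc k)
  then obtain v' w' where "v' \<in> theta1_pow k x" "v \<in> theta1_word v'"
    and "w' \<in> theta1_pow k y" "w \<in> theta1_word w'"
    by (auto simp: theta1_pow_Suc theta1_set_def)
  with Suc.IH[of v' w'] theta1_word_append[of v v' w w'] show ?case
    by (auto simp: theta1_pow_Suc theta1_set_def)
qed

lemma funpow_theta1_set: "(theta1_set ^^ k) S = (\<Union>w\<in>S. theta1_pow k w)"
  by (induction k) (auto simp: theta1_pow_def theta1_set_def)

lemma theta1_pow_Suc': "theta1_pow (Suc k) w = (\<Union>w'\<in>theta1_word w. theta1_pow k w')"
  unfolding theta1_pow_def funpow_Suc_right comp_def
  by (simp add: funpow_theta1_set theta1_set_def)

lemma theta1_pow_Suc_b: "theta1_pow (Suc k) [b] = theta1_pow k [a]"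
  by (simp add: theta1_pow_Suc' conc_def)

lemma theta1_pow_Suc_a_right:
  "v \<in> theta1_pow k [a] \<Longrightarrow> y \<in> theta1_pow k [b] \<Longrightarrow> v @ y \<in> theta1_pow (Suc k) [a]"
  using theta1_pow_append[of v k "[a]" y "[b]"] by (auto simp: theta1_pow_Suc' conc_def)

lemma theta1_pow_Suc_a_left:
  "y \<in> theta1_pow k [b] \<Longrightarrow> v \<in> theta1_pow k [a] \<Longrightarrow> y @ v \<in> theta1_pow (Suc k) [a]"
  using theta1_pow_append[of y k "[b]" v "[a]"] by (auto simp: theta1_pow_Suc' conc_def)

lemma theta1_pow_nonempty: "theta1_pow k [a] \<noteq> {} \<and> theta1_pow k [b] \<noteq> {}"
proof (induction k)
  case 0
  then show ?case by (simp add: theta1_pow_def)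
next
  case (Suc k)
  then obtain v y where "v \<in> theta1_pow k [a]" "y \<in> theta1_pow k [b]" by blast
  then show ?case using theta1_pow_Suc_a_right theta1_pow_Suc_b by blast
qed

lemma theta1_pow_a_prefix_extend:
  assumes "j \<le> k" and "v \<in> theta1_pow j [a]"
  shows "\<exists>w\<in>theta1_pow k [a]. prefix v w"
  using assms(1)
proof (induction k rule: dec_induct)
  case base
  then show ?case using assms(2) by blast
next
  case (step k)
  then obtain w where "w \<in> theta1_pow k [a]" "prefix v w" by blast
  moreover obtain y where "y \<in> theta1_pow k [b]" using theta1_pow_nonempty by blast
  ultimately show ?case using theta1_pow_Suc_a_right prefix_prefix by blast
qed

definition extendable :: "nat \<Rightarrow> letter list \<Rightarrow> bool" where
  "extendable k u \<longleftrightarrow> (\<exists>w\<in>theta1_pow k [a]. prefix (u @ [a, b]) w \<or> prefix (u @ [b, a]) w)"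

lemma extendable_Nil: "extendable (Suc 0) []"
proof -
  have "[a, b] \<in> theta1_pow (Suc 0) [a]"
    by (simp add: theta1_pow_def theta1_set_def conc_def)
  then show ?thesis by (auto simp: extendable_def)
qed

lemma extendable_mono: "j \<le> k \<Longrightarrow> extendable j u \<Longrightarrow> extendable k u"
  unfolding extendable_def
  by (meson prefix_order.trans theta1_pow_a_prefix_extend)

lemma extendable_prepend:
  assumes "x \<in> theta1_pow k [b]" and "extendable k u"
  shows "extendable (Suc k) (x @ u)"
proof -
  from assms(2) obtain w where w: "w \<in> theta1_pow k [a]"
    "prefix (u @ [a, b]) w \<or> prefix (u @ [b, a]) w"
    unfolding extendable_def by blast
  have "x @ w \<in> theta1_pow (Suc k) [a]" using theta1_pow_Suc_a_left[OF assms(1) w(1)] .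
  moreover have "prefix (x @ u @ [a, b]) (x @ w) \<or> prefix (x @ u @ [b, a]) (x @ w)"
    using w(2) by simp
  ultimately show ?thesis unfolding extendable_def by (simp only: append_assoc) blast
qed

lemma zeck_words_Suc_zero: "eps (Suc k) = 0 \<Longrightarrow> zeck_words eps (Suc k) = zeck_words eps k"
  by (simp add: conc_def)

lemma zeck_words_Suc_one:
  "eps (Suc k) = 1 \<Longrightarrow> u \<in> zeck_words eps (Suc k) \<Longrightarrow>
   \<exists>x u'. u = x @ u' \<and> x \<in> theta1_pow k [a] \<and> u' \<in> zeck_words eps k"
  by (auto simp: conc_def theta1_pow_Suc_b)

lemma zeck_words_extendable:
  assumes "\<forall>i\<in>{1..m}. eps i \<in> {0, 1}" and "\<forall>i\<in>{1..<m}. eps i * eps (Suc i) = 0"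
    and "u \<in> zeck_words eps m"
  shows "extendable (Suc m) u"
  using assms
proof (induction m arbitrary: u rule: less_induct)
  case (less m)
  show ?case
  proof (cases m)
    case 0
    then show ?thesis using less.prems(3) extendable_Nil by simp
  next
    case m: (Suc k)
    have IH: "extendable (Suc j) v" if "j < m" "v \<in> zeck_words eps j" for j v
      using less.IH[OF that(1) _ _ that(2)] less.prems(1,2) that(1) by simp
    consider "eps (Suc k) = 0" | "eps (Suc k) = 1"
      using bspec[OF less.prems(1), of "Suc k"] m by auto
    then show ?thesis
    proof cases
      case 1
      then have "extendable (Suc k) u"
        using IH less.prems(3) m zeck_words_Suc_zero by auto
      then show ?thesis using extendable_mono[of "Suc k" "Suc m"] m by simp
    next
      case 2
      then obtain x u' where u: "u = x @ u'" "x \<in> theta1_pow k [a]" "u' \<in> zeck_words eps k"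
        using zeck_words_Suc_one less.prems(3) m by blast
      have "extendable (Suc k) u'"
      proof (cases k)
        case 0
        then show ?thesis using u(3) extendable_Nil by simp
      next
        case (Suc j)
        have "eps k = 0" using less.prems(2) 2 m Suc by force
        then have "extendable (Suc j) u'" using IH[of j u'] u(3) m Suc zeck_words_Suc_zero by simp
        then show ?thesis using extendable_mono[of "Suc j" "Suc k"] Suc by simp
      qed
      then show ?thesis
        using extendable_prepend[of x "Suc k" u'] u(1,2) m theta1_pow_Suc_b by simp
    qed
  qed
qed

theorem mainTheorem4:
  fixes p n :: nat and eps :: "nat \<Rightarrow> nat" and u :: "letter list"
  assumes "p \<ge> 1" and "n \<ge> 1"
    and "\<forall>i\<in>{1..p}. eps i \<in> {0, 1}"
    and "eps p = 1"
    and "\<forall>i\<in>{1..<p}. eps i * eps (Suc i) = 0"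
    and "n = (\<Sum>i=1..p. eps i * fibo i)"
    and "u \<in> zeck_words eps p"
  shows "\<exists>w \<in> theta1_pow (p + 1) [a]. prefix (u @ [a, b]) w \<or> prefix (u @ [b, a]) w"
  using zeck_words_extendable[OF assms(3,5,7)] by (simp add: extendable_def)

end
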